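(* If a Boolean function $f:\{0,1\}^n\to\{0,1\}$ has a nearest neighbor representation with $m$ prototypes, then it has a sign-representation over $\{1,2\}$ having $m$ terms (monomials).
   Context: A nearest neighbor representation of $f$ is a pair of disjoint sets $(P,N)$ of points of $\mathbb R^n$ (prototypes; their number is $|P\cup N|$) such that for every $a\in\{0,1\}^n$: if $f(a)=1$, there is $b\in P$ with $d(a,b)<d(a,c)$ for all $c\in N$; if $f(a)=0$, there is $b\in N$ with $d(a,b)<d(a,c)$ for all $c\in P$ ($d$ = Euclidean distance). Write $\tilde x_i=2^{x_i}$, a bijection $\{0,1\}\to\{1,2\}$. A multivariate polynomial $p(\tilde x_1,\dots,\tilde x_n)$ (with real coefficients and nonnegative integer exponents) is a sign-representation of $f$ over $\{1,2\}$ if for every $x\in\{0,1\}^n$, $p(2^{x_1},\dots,2^{x_n})\ge 0$ iff $f(x)=1$. The number of terms is the number of monomials of $p$. *)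

theory Defs
  imports "HOL-Analysis.Analysis"
begin

text \<open>Boolean inputs a in {0,1}^n are functions 'n => bool (n = CARD('n));
  they are embedded into R^n = real^'n as 0/1 vectors.\<close>
definition bvec :: "('n::finite \<Rightarrow> bool) \<Rightarrow> real^'n" where
  "bvec a = (\<chi> i. if a i then 1 else 0)"

definition nn_rep :: "(('n::finite \<Rightarrow> bool) \<Rightarrow> bool) \<Rightarrow> (real^'n) set \<Rightarrow> (real^'n) set \<Rightarrow> bool" where
  "nn_rep f P N \<longleftrightarrow> finite P \<and> finite N \<and> P \<inter> N = {} \<and>
     (\<forall>a. (f a \<longrightarrow> (\<exists>b\<in>P. \<forall>c\<in>N. dist (bvec a) b < dist (bvec a) c)) \<and>
          (\<not> f a \<longrightarrow> (\<exists>b\<in>N. \<forall>c\<in>P. dist (bvec a) b < dist (bvec a) c)))"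

text \<open>A multivariate real polynomial in variables indexed by 'n is given by its
  coefficient function on exponent vectors ('n => nat), with finite support.\<close>
definition mpoly_support :: "(('n::finite \<Rightarrow> nat) \<Rightarrow> real) \<Rightarrow> ('n \<Rightarrow> nat) set" where
  "mpoly_support c = {\<alpha>. c \<alpha> \<noteq> 0}"

definition mpoly_eval :: "(('n::finite \<Rightarrow> nat) \<Rightarrow> real) \<Rightarrow> ('n \<Rightarrow> real) \<Rightarrow> real" where
  "mpoly_eval c x = (\<Sum>\<alpha>\<in>mpoly_support c. c \<alpha> * (\<Prod>i\<in>UNIV. x i ^ \<alpha> i))"

definition num_terms :: "(('n::finite \<Rightarrow> nat) \<Rightarrow> real) \<Rightarrow> nat" where
  "num_terms c = card (mpoly_support c)"

text \<open>Sign-representation of f over {1,2}: evaluate at x~_i = 2^(x_i).\<close>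
definition sign_rep_12 :: "(('n::finite \<Rightarrow> bool) \<Rightarrow> bool) \<Rightarrow> (('n \<Rightarrow> nat) \<Rightarrow> real) \<Rightarrow> bool" where
  "sign_rep_12 f c \<longleftrightarrow> finite (mpoly_support c) \<and>
     (\<forall>a. mpoly_eval c (\<lambda>i. 2 ^ (if a i then 1 else 0)) \<ge> 0 \<longleftrightarrow> f a)"

end

theory Submission
  imports Defs
begin

(* The nearest neighbour rule picks the prototype p maximising
     -|a - p|^2 = (SUM i with a_i. 2 p_i - 1) - |p|^2,
   a score that is linear in the Boolean input a.  For a large parameter t let prototype p
   contribute the monomial with exponents floor (t (2 p_i - 1 + R)) (the shift R makes them
   nonnegative) and coefficient +-2^(-t |p|^2), signed by the class of p.  At the point 2^a
   this term equals, up to a factor common to all prototypes and a rounding factor in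
   [2^-n, 1], the number 2^(t score(a, p)).  Once t times the gap between the nearest
   prototype and the prototypes of the other class exceeds n + m, the single term of the
   nearest prototype outweighs all terms of the other class together, so the sign is right.
   For large t distinct prototypes also get distinct exponent vectors, so the polynomial
   has exactly m monomials. *)

lemma eventually_le_mult_at_top:
  fixes d C :: real
  assumes "0 < d"
  shows "\<forall>\<^sub>F t in at_top. C \<le> t * d"
  using eventually_ge_at_top[of "C / d"] by eventually_elim (use assms in \<open>simp add: field_simps\<close>)

lemma abs_diff_less_1_if_nat_floor_eq:
  fixes x y :: real
  assumes "0 \<le> x" "0 \<le> y" "nat \<lfloor>x\<rfloor> = nat \<lfloor>y\<rfloor>"
  shows "\<bar>x - y\<bar> < 1"
proof -
  have "\<lfloor>x\<rfloor> = \<lfloor>y\<rfloor>" using assms by (simp add: eq_nat_nat_iff)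
  then show ?thesis using floor_correct[of x] floor_correct[of y] by linarith
qed

lemma sum_nat_floor_bounds:
  fixes x :: "'a \<Rightarrow> real"
  assumes "finite I" "\<And>i. i \<in> I \<Longrightarrow> 0 \<le> x i"
  shows "(\<Sum>i\<in>I. x i) - card I \<le> (\<Sum>i\<in>I. real (nat \<lfloor>x i\<rfloor>))"
    and "(\<Sum>i\<in>I. real (nat \<lfloor>x i\<rfloor>)) \<le> (\<Sum>i\<in>I. x i)"
proof -
  have floor: "x i - 1 \<le> real (nat \<lfloor>x i\<rfloor>) \<and> real (nat \<lfloor>x i\<rfloor>) \<le> x i" if "i \<in> I" for i
    using assms(2)[OF that] floor_correct[of "x i"] by simp
  have "(\<Sum>i\<in>I. x i) - card I = (\<Sum>i\<in>I. x i - 1)"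
    by (simp add: sum_subtractf)
  also have "\<dots> \<le> (\<Sum>i\<in>I. real (nat \<lfloor>x i\<rfloor>))"
    using floor by (intro sum_mono) auto
  finally show "(\<Sum>i\<in>I. x i) - card I \<le> (\<Sum>i\<in>I. real (nat \<lfloor>x i\<rfloor>))" .
  show "(\<Sum>i\<in>I. real (nat \<lfloor>x i\<rfloor>)) \<le> (\<Sum>i\<in>I. x i)"
    using floor by (intro sum_mono) auto
qed

lemma sum_powr_less_sum_powr:
  fixes h :: "'a \<Rightarrow> real"
  assumes "finite A" "b \<in> A" "\<And>c. c \<in> B \<Longrightarrow> h c + k \<le> h b"
    and "real (card B) < 2 powr k"
  shows "(\<Sum>c\<in>B. 2 powr h c) < (\<Sum>p\<in>A. 2 powr h p)"
proof -
  have "(\<Sum>c\<in>B. 2 powr h c) \<le> (\<Sum>c\<in>B. 2 powr (h b - k))"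
    using assms(3) by (intro sum_mono) (simp add: le_diff_eq)
  also have "\<dots> = real (card B) / 2 powr k * 2 powr h b"
    by (simp add: powr_diff)
  also have "\<dots> < 1 * 2 powr h b"
    using assms(4) by (intro mult_strict_right_mono) simp_all
  also have "\<dots> = 2 powr h b"
    by simp
  also have "\<dots> \<le> (\<Sum>p\<in>A. 2 powr h p)"
    using assms(1,2) by (intro member_le_sum) auto
  finally show ?thesis .
qed

lemma signed_sum_powr_nonneg_iff:
  fixes h :: "'a \<Rightarrow> real"
  assumes "finite S" "b \<in> S"
    and "\<And>c. c \<in> S \<Longrightarrow> (c \<in> P) \<noteq> (b \<in> P) \<Longrightarrow> h c + card S \<le> h b"
  shows "0 \<le> (\<Sum>p\<in>S. (if p \<in> P then 1 else -1) * 2 powr h p) \<longleftrightarrow> b \<in> P"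
proof -
  have small: "real (card B) < 2 powr card S" if "B \<subseteq> S" for B
  proof -
    have "card B \<le> card S" using assms(1) that by (rule card_mono)
    also have "card S < 2 ^ card S" by (rule less_exp)
    finally show ?thesis by (simp add: powr_realpow)
  qed
  have split: "(\<Sum>p\<in>S. (if p \<in> P then 1 else -1) * 2 powr h p)
      = (\<Sum>p\<in>S \<inter> P. 2 powr h p) - (\<Sum>p\<in>S - P. 2 powr h p)"
  proof -
    have "(if p \<in> P then 1 else -1) * 2 powr h p = (if p \<in> P then 2 powr h p else - (2 powr h p))"
      for p by simp
    then show ?thesis using assms(1) by (simp add: sum.If_cases Diff_eq sum_negf)
  qed
  show ?thesis
  proof (cases "b \<in> P")
    case True
    have "(\<Sum>p\<in>S - P. 2 powr h p) < (\<Sum>p\<in>S \<inter> P. 2 powr h p)"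
      using assms True small[of "S - P"] by (intro sum_powr_less_sum_powr) auto
    then show ?thesis using True split by simp
  next
    case False
    have "(\<Sum>p\<in>S \<inter> P. 2 powr h p) < (\<Sum>p\<in>S - P. 2 powr h p)"
      using assms False small[of "S \<inter> P"] by (intro sum_powr_less_sum_powr) auto
    then show ?thesis using False split by simp
  qed
qed

lemma prod_power_indicator_two:
  fixes a :: "'n::finite \<Rightarrow> bool"
  shows "(\<Prod>i\<in>UNIV. ((2::real) ^ (if a i then 1 else 0)) ^ k i) = 2 powr (\<Sum>i | a i. real (k i))"
proof -
  have "(\<Prod>i\<in>UNIV. ((2::real) ^ (if a i then 1 else 0)) ^ k i) = (\<Prod>i | a i. 2 ^ k i)"
  proof -
    have "((2::real) ^ (if a i then 1 else 0)) ^ k i = (if a i then 2 ^ k i else 1)" for i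
      by simp
    then show ?thesis using prod.inter_filter[of UNIV "\<lambda>i. (2::real) ^ k i" a] by simp
  qed
  also have "\<dots> = 2 powr (\<Sum>i | a i. real (k i))"
    by (simp add: powr_sum powr_realpow)
  finally show ?thesis .
qed

definition mpoly_of_terms ::
    "('p \<Rightarrow> 'n::finite \<Rightarrow> nat) \<Rightarrow> ('p \<Rightarrow> real) \<Rightarrow> 'p set \<Rightarrow> ('n \<Rightarrow> nat) \<Rightarrow> real" where
  "mpoly_of_terms e w S \<gamma> = (\<Sum>p | p \<in> S \<and> e p = \<gamma>. w p)"

lemma mpoly_support_of_terms_subset: "mpoly_support (mpoly_of_terms e w S) \<subseteq> e ` S"
  unfolding mpoly_support_def mpoly_of_terms_def by (force intro: sum.neutral)

lemma mpoly_support_of_terms: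
  assumes "inj_on e S" and "\<And>p. p \<in> S \<Longrightarrow> w p \<noteq> 0"
  shows "mpoly_support (mpoly_of_terms e w S) = e ` S"
proof -
  have "mpoly_of_terms e w S (e p) = w p" if "p \<in> S" for p
  proof -
    have "{q. q \<in> S \<and> e q = e p} = {p}"
      using assms(1) that by (auto dest: inj_onD)
    then show ?thesis unfolding mpoly_of_terms_def by simp
  qed
  then have "e ` S \<subseteq> mpoly_support (mpoly_of_terms e w S)"
    using assms(2) unfolding mpoly_support_def by auto
  then show ?thesis using mpoly_support_of_terms_subset by blast
qed

lemma mpoly_eval_of_terms:
  assumes "finite S"
  shows "mpoly_eval (mpoly_of_terms e w S) x = (\<Sum>p\<in>S. w p * (\<Prod>i\<in>UNIV. x i ^ e p i))"
proof -
  let ?c = "mpoly_of_terms e w S" and ?mono = "\<lambda>\<gamma>. \<Prod>i\<in>UNIV. x i ^ \<gamma> i"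
  have "mpoly_eval ?c x = (\<Sum>\<gamma>\<in>e ` S. ?c \<gamma> * ?mono \<gamma>)"
    unfolding mpoly_eval_def using assms mpoly_support_of_terms_subset[of e w S]
    by (intro sum.mono_neutral_left) (auto simp: mpoly_support_def)
  also have "\<dots> = (\<Sum>\<gamma>\<in>e ` S. \<Sum>p | p \<in> S \<and> e p = \<gamma>. w p * ?mono (e p))"
    unfolding mpoly_of_terms_def sum_distrib_right by (intro sum.cong) auto
  also have "\<dots> = (\<Sum>p\<in>S. w p * ?mono (e p))"
    using sum.image_gen[OF assms, of "\<lambda>p. w p * ?mono (e p)" e] by simp
  finally show ?thesis .
qed

lemma eventually_inj_on_nat_floor_mult:
  fixes u :: "'p \<Rightarrow> 'n \<Rightarrow> real"
  assumes "finite S" "inj_on u S" "\<And>p i. p \<in> S \<Longrightarrow> 0 \<le> u p i"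
  shows "\<forall>\<^sub>F t in at_top. inj_on (\<lambda>p i. nat \<lfloor>t * u p i\<rfloor>) S"
proof -
  have "\<forall>\<^sub>F t in at_top. \<forall>p\<in>S. \<forall>q\<in>S. u p \<noteq> u q \<longrightarrow>
      (\<lambda>i. nat \<lfloor>t * u p i\<rfloor>) \<noteq> (\<lambda>i. nat \<lfloor>t * u q i\<rfloor>)"
  proof (intro eventually_ball_finite ballI assms(1))
    fix p q assume "p \<in> S" "q \<in> S"
    show "\<forall>\<^sub>F t in at_top. u p \<noteq> u q \<longrightarrow> (\<lambda>i. nat \<lfloor>t * u p i\<rfloor>) \<noteq> (\<lambda>i. nat \<lfloor>t * u q i\<rfloor>)"
    proof (cases "u p = u q")
      case False
      then obtain i where "u p i \<noteq> u q i" by blast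
      then have "\<forall>\<^sub>F t in at_top. 1 \<le> t * \<bar>u p i - u q i\<bar> \<and> 0 \<le> t"
        by (intro eventually_conj eventually_le_mult_at_top) auto
      then show ?thesis
      proof eventually_elim
        case (elim t)
        then have "\<not> \<bar>t * u p i - t * u q i\<bar> < 1"
          by (simp add: abs_mult right_diff_distrib[symmetric])
        then have "nat \<lfloor>t * u p i\<rfloor> \<noteq> nat \<lfloor>t * u q i\<rfloor>"
          using abs_diff_less_1_if_nat_floor_eq assms(3) \<open>p \<in> S\<close> \<open>q \<in> S\<close> elim by auto
        then show ?case by metis
      qed
    qed simp
  qed
  then show ?thesis
    by eventually_elim (use assms(2) in \<open>auto simp: inj_on_def\<close>)
qed

definition lin_score :: "('p \<Rightarrow> 'n \<Rightarrow> real) \<Rightarrow> ('p \<Rightarrow> real) \<Rightarrow> ('n \<Rightarrow> bool) \<Rightarrow> 'p \<Rightarrow> real" where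
  "lin_score u v a p = (\<Sum>i | a i. u p i) + v p"

definition max_score_rep ::
    "('a \<Rightarrow> bool) \<Rightarrow> 'p set \<Rightarrow> 'p set \<Rightarrow> ('a \<Rightarrow> 'p \<Rightarrow> real) \<Rightarrow> bool" where
  "max_score_rep f S P score \<longleftrightarrow>
     (\<forall>a. \<exists>b\<in>S. (b \<in> P \<longleftrightarrow> f a) \<and> (\<forall>c\<in>S. (c \<in> P) \<noteq> f a \<longrightarrow> score a c < score a b))"

lemma lin_score_nat_floor_bounds:
  fixes u :: "'p \<Rightarrow> 'n::finite \<Rightarrow> real" and v :: "'p \<Rightarrow> real" and a :: "'n \<Rightarrow> bool"
    and t :: real
  assumes "0 \<le> t" "\<And>i. 0 \<le> u p i"
  defines "E \<equiv> t * v p + (\<Sum>i | a i. real (nat \<lfloor>t * u p i\<rfloor>))"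
  shows "t * lin_score u v a p - CARD('n) \<le> E" and "E \<le> t * lin_score u v a p"
proof -
  have scaled: "t * lin_score u v a p = (\<Sum>i | a i. t * u p i) + t * v p"
    unfolding lin_score_def by (simp add: sum_distrib_left distrib_left)
  have "card {i. a i} \<le> CARD('n)" by (rule card_mono) auto
  then show "t * lin_score u v a p - CARD('n) \<le> E"
    using sum_nat_floor_bounds(1)[of "{i. a i}" "\<lambda>i. t * u p i"] assms scaled by simp
  show "E \<le> t * lin_score u v a p"
    using sum_nat_floor_bounds(2)[of "{i. a i}" "\<lambda>i. t * u p i"] assms scaled by simp
qed

lemma eventually_max_score_margin:
  fixes score :: "'a::finite \<Rightarrow> 'p \<Rightarrow> real"
  assumes "finite S" "\<And>a. win a \<in> S"
    and "\<And>a c. c \<in> S \<Longrightarrow> (c \<in> P) \<noteq> f a \<Longrightarrow> score a c < score a (win a)"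
  shows "\<forall>\<^sub>F t in at_top. \<forall>a. \<forall>c\<in>S. (c \<in> P) \<noteq> f a \<longrightarrow> K \<le> t * (score a (win a) - score a c)"
proof (intro eventually_all_finite eventually_ball_finite ballI assms(1))
  fix a c assume "c \<in> S"
  show "\<forall>\<^sub>F t in at_top. (c \<in> P) \<noteq> f a \<longrightarrow> K \<le> t * (score a (win a) - score a c)"
  proof (cases "(c \<in> P) \<noteq> f a")
    case True
    then have "0 < score a (win a) - score a c" using assms(3) \<open>c \<in> S\<close> by simp
    from eventually_le_mult_at_top[OF this, of K] show ?thesis by (rule eventually_mono) simp
  qed simp
qed

definition score_poly ::
    "real \<Rightarrow> ('p \<Rightarrow> 'n::finite \<Rightarrow> real) \<Rightarrow> ('p \<Rightarrow> real) \<Rightarrow> 'p set \<Rightarrow> 'p set \<Rightarrow> ('n \<Rightarrow> nat) \<Rightarrow> real"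
  where
  "score_poly t u v S P =
     mpoly_of_terms (\<lambda>p i. nat \<lfloor>t * u p i\<rfloor>) (\<lambda>p. (if p \<in> P then 1 else -1) * 2 powr (t * v p)) S"

lemma mpoly_eval_score_poly:
  assumes "finite S"
  shows "mpoly_eval (score_poly t u v S P) (\<lambda>i. 2 ^ (if a i then 1 else 0)) =
    (\<Sum>p\<in>S. (if p \<in> P then 1 else -1) *
       2 powr (t * v p + (\<Sum>i | a i. real (nat \<lfloor>t * u p i\<rfloor>))))"
  unfolding score_poly_def mpoly_eval_of_terms[OF assms] prod_power_indicator_two
  by (simp add: powr_add mult.assoc)

lemma mpoly_support_score_poly:
  assumes "inj_on (\<lambda>p i. nat \<lfloor>t * u p i\<rfloor>) S"
  shows "mpoly_support (score_poly t u v S P) = (\<lambda>p i. nat \<lfloor>t * u p i\<rfloor>) ` S"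
  unfolding score_poly_def using assms by (rule mpoly_support_of_terms) simp

lemma num_terms_score_poly:
  assumes "inj_on (\<lambda>p i. nat \<lfloor>t * u p i\<rfloor>) S"
  shows "num_terms (score_poly t u v S P) = card S"
  unfolding num_terms_def mpoly_support_score_poly[OF assms] using assms by (rule card_image)

lemma score_poly_nonneg_iff:
  fixes u :: "'p \<Rightarrow> 'n::finite \<Rightarrow> real"
  assumes "finite S" "0 \<le> t" "\<And>p i. p \<in> S \<Longrightarrow> 0 \<le> u p i" "b \<in> S"
    and margin: "\<And>c. c \<in> S \<Longrightarrow> (c \<in> P) \<noteq> (b \<in> P) \<Longrightarrow>
      CARD('n) + card S \<le> t * (lin_score u v a b - lin_score u v a c)"
  shows "0 \<le> mpoly_eval (score_poly t u v S P) (\<lambda>i. 2 ^ (if a i then 1 else 0)) \<longleftrightarrow> b \<in> P"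
proof -
  define E where "E p = t * v p + (\<Sum>i | a i. real (nat \<lfloor>t * u p i\<rfloor>))" for p
  have "E c + card S \<le> E b" if "c \<in> S" "(c \<in> P) \<noteq> (b \<in> P)" for c
  proof -
    have "E c \<le> t * lin_score u v a c"
      unfolding E_def using assms(2) assms(3)[OF that(1)] by (rule lin_score_nat_floor_bounds(2))
    moreover have "t * lin_score u v a b - CARD('n) \<le> E b"
      unfolding E_def using assms(2) assms(3)[OF assms(4)] by (rule lin_score_nat_floor_bounds(1))
    ultimately show ?thesis
      using margin[OF that] by (simp add: right_diff_distrib)
  qed
  then show ?thesis
    unfolding mpoly_eval_score_poly[OF assms(1)] E_def[symmetric]
    by (rule signed_sum_powr_nonneg_iff[OF assms(1,4)])
qed

lemma sign_rep_12_of_max_score_rep_nonneg: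
  fixes u :: "'p \<Rightarrow> 'n::finite \<Rightarrow> real"
  assumes "finite S" "inj_on u S" "\<And>p i. p \<in> S \<Longrightarrow> 0 \<le> u p i"
    and "max_score_rep f S P (lin_score u v)"
  shows "\<exists>c. sign_rep_12 f c \<and> num_terms c = card S"
proof -
  obtain win where win: "\<And>a. win a \<in> S" "\<And>a. win a \<in> P \<longleftrightarrow> f a"
    and beats: "\<And>a c. c \<in> S \<Longrightarrow> (c \<in> P) \<noteq> f a \<Longrightarrow> lin_score u v a c < lin_score u v a (win a)"
    using assms(4) unfolding max_score_rep_def by metis
  have "\<forall>\<^sub>F t in at_top. 0 \<le> (t::real)"
    by (rule eventually_ge_at_top)
  moreover have "\<forall>\<^sub>F t in at_top. inj_on (\<lambda>p i. nat \<lfloor>t * u p i\<rfloor>) S"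
    using assms(1-3) by (rule eventually_inj_on_nat_floor_mult)
  moreover have "\<forall>\<^sub>F t in at_top. \<forall>a. \<forall>c\<in>S. (c \<in> P) \<noteq> f a \<longrightarrow>
      CARD('n) + card S \<le> t * (lin_score u v a (win a) - lin_score u v a c)"
    using assms(1) win(1) beats by (rule eventually_max_score_margin)
  ultimately have "\<forall>\<^sub>F t in at_top. 0 \<le> t \<and> inj_on (\<lambda>p i. nat \<lfloor>t * u p i\<rfloor>) S \<and>
      (\<forall>a. \<forall>c\<in>S. (c \<in> P) \<noteq> f a \<longrightarrow>
         CARD('n) + card S \<le> t * (lin_score u v a (win a) - lin_score u v a c))"
    by eventually_elim blast
  then obtain t where "0 \<le> t" and inj: "inj_on (\<lambda>p i. nat \<lfloor>t * u p i\<rfloor>) S"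
    and margin: "\<And>a c. c \<in> S \<Longrightarrow> (c \<in> P) \<noteq> f a \<Longrightarrow>
         CARD('n) + card S \<le> t * (lin_score u v a (win a) - lin_score u v a c)"
    using eventually_happens'[OF trivial_limit_at_top_linorder] by blast
  have "0 \<le> mpoly_eval (score_poly t u v S P) (\<lambda>i. 2 ^ (if a i then 1 else 0)) \<longleftrightarrow> win a \<in> P" for a
  proof (rule score_poly_nonneg_iff[where u = u and v = v and P = P, OF assms(1) \<open>0 \<le> t\<close> assms(3) win(1)])
    fix c assume "c \<in> S" "(c \<in> P) \<noteq> (win a \<in> P)"
    then show "CARD('n) + card S \<le> t * (lin_score u v a (win a) - lin_score u v a c)"
      using margin win(2) by metis
  qed
  then have "sign_rep_12 f (score_poly t u v S P)"
    unfolding sign_rep_12_def mpoly_support_score_poly[OF inj] using assms(1) win(2) by simp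
  then show ?thesis
    using num_terms_score_poly[OF inj] by blast
qed

lemma sign_rep_12_of_max_score_rep:
  fixes u :: "'p \<Rightarrow> 'n::finite \<Rightarrow> real"
  assumes "finite S" "inj_on u S" "max_score_rep f S P (lin_score u v)"
  shows "\<exists>c. sign_rep_12 f c \<and> num_terms c = card S"
proof -
  define R where "R = (\<Sum>p\<in>S. \<Sum>i\<in>UNIV. \<bar>u p i\<bar>)"
  define u' where "u' p i = u p i + R" for p i
  have bound: "\<bar>u p i\<bar> \<le> R" if "p \<in> S" for p i
  proof -
    have "\<bar>u p i\<bar> \<le> (\<Sum>i\<in>UNIV. \<bar>u p i\<bar>)" by (rule member_le_sum) auto
    also have "\<dots> \<le> R"
      unfolding R_def using assms(1) that by (intro member_le_sum) (auto intro: sum_nonneg)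
    finally show ?thesis .
  qed
  have nonneg: "0 \<le> u' p i" if "p \<in> S" for p i
    using bound[OF that, of i] abs_ge_minus_self[of "u p i"] unfolding u'_def by linarith
  have inj: "inj_on u' S"
    using assms(2) by (auto simp: inj_on_def u'_def fun_eq_iff)
  have shift: "lin_score u' v a p = lin_score u v a p + R * card {i. a i}" for a p
    unfolding lin_score_def u'_def by (simp add: sum.distrib)
  have "max_score_rep f S P (lin_score u' v)"
    using assms(3) unfolding max_score_rep_def shift by simp
  from sign_rep_12_of_max_score_rep_nonneg[OF assms(1) inj nonneg this] show ?thesis .
qed

lemma neg_dist_bvec_power2:
  "- (dist (bvec a) p ^ 2) = lin_score (\<lambda>p i. 2 * p $ i - 1) (\<lambda>p. - (\<Sum>i\<in>UNIV. (p $ i)\<^sup>2)) a p"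
proof -
  have "dist (bvec a) p ^ 2 = (\<Sum>i\<in>UNIV. (bvec a $ i - p $ i)\<^sup>2)"
    by (simp add: dist_vec_def L2_set_def dist_real_def sum_nonneg)
  also have "\<dots> = (\<Sum>i\<in>UNIV. (if a i then 1 - 2 * p $ i else 0) + (p $ i)\<^sup>2)"
    by (intro sum.cong) (auto simp: bvec_def power2_eq_square algebra_simps)
  also have "\<dots> = - (\<Sum>i | a i. 2 * p $ i - 1) + (\<Sum>i\<in>UNIV. (p $ i)\<^sup>2)"
    by (simp add: sum.distrib sum.inter_filter[symmetric] sum_negf[symmetric])
  finally show ?thesis
    unfolding lin_score_def by simp
qed

lemma nn_rep_imp_max_score_rep:
  fixes f :: "('n::finite \<Rightarrow> bool) \<Rightarrow> bool"
  assumes "nn_rep f P N"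
  shows "max_score_rep f (P \<union> N) P (\<lambda>a p. - (dist (bvec a) p ^ 2))"
  unfolding max_score_rep_def
proof
  fix a :: "'n \<Rightarrow> bool"
  have disjoint: "P \<inter> N = {}"
    and "\<exists>b\<in>(if f a then P else N). \<forall>c\<in>(if f a then N else P).
       dist (bvec a) b < dist (bvec a) c"
    using assms unfolding nn_rep_def by auto
  then obtain b where b: "b \<in> (if f a then P else N)"
    and closer: "\<And>c. c \<in> (if f a then N else P) \<Longrightarrow> - (dist (bvec a) c ^ 2) < - (dist (bvec a) b ^ 2)"
    by (auto simp: power_strict_mono)
  have "b \<in> P \<union> N" "(b \<in> P) = f a"
    using b disjoint by (auto split: if_splits)
  moreover have "- (dist (bvec a) c ^ 2) < - (dist (bvec a) b ^ 2)"
    if "c \<in> P \<union> N" "(c \<in> P) \<noteq> f a" for c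
    using that by (intro closer) auto
  ultimately show "\<exists>b\<in>P \<union> N. (b \<in> P) = f a \<and>
      (\<forall>c\<in>P \<union> N. (c \<in> P) \<noteq> f a \<longrightarrow> - (dist (bvec a) c ^ 2) < - (dist (bvec a) b ^ 2))"
    by blast
qed

theorem lemma7:
  fixes f :: "('n::finite \<Rightarrow> bool) \<Rightarrow> bool"
    and P N :: "(real^'n) set" and m :: nat
  assumes "nn_rep f P N" and "card (P \<union> N) = m"
  shows "\<exists>c. sign_rep_12 f c \<and> num_terms c = m"
proof -
  have "finite (P \<union> N)"
    using assms(1) by (simp add: nn_rep_def)
  moreover have "inj_on (\<lambda>p i. 2 * p $ i - 1 :: real) (P \<union> N)"
    by (auto simp: inj_on_def fun_eq_iff vec_eq_iff)
  moreover have "max_score_rep f (P \<union> N) P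
      (lin_score (\<lambda>p i. 2 * p $ i - 1) (\<lambda>p. - (\<Sum>i\<in>UNIV. (p $ i)\<^sup>2)))"
    using nn_rep_imp_max_score_rep[OF assms(1)] by (simp add: neg_dist_bvec_power2)
  ultimately show ?thesis
    using sign_rep_12_of_max_score_rep[of "P \<union> N"] assms(2) by metis
qed

end
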